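(* Let $P=(X,\leq)$ be a $(3+1)$-free partially ordered set with no infinite antichains. Then there exist a partition of $X$ into antichains and a chain $C\subseteq X$ of $P$ such that $C$ intersects every member of the partition.
   Context: A poset is $(3+1)$-free if it contains no induced subposet isomorphic to the disjoint union of a $3$-element chain and a $1$-element chain (i.e., there are no elements $a<b<c$ and $d$ with $d$ incomparable to each of $a,b,c$). An antichain is a set of pairwise incomparable elements; a chain is a set of pairwise comparable elements. *)

theory Defs
  imports Main
begin

definition partial_order_on_set :: "'a set \<Rightarrow> ('a \<Rightarrow> 'a \<Rightarrow> bool) \<Rightarrow> bool" where
  "partial_order_on_set X le \<longleftrightarrow>
     (\<forall>x\<in>X. le x x) \<and>
     (\<forall>x\<in>X. \<forall>y\<in>X. le x y \<and> le y x \<longrightarrow> x = y) \<and>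
     (\<forall>x\<in>X. \<forall>y\<in>X. \<forall>z\<in>X. le x y \<and> le y z \<longrightarrow> le x z)"

definition comparable :: "('a \<Rightarrow> 'a \<Rightarrow> bool) \<Rightarrow> 'a \<Rightarrow> 'a \<Rightarrow> bool" where
  "comparable le x y \<longleftrightarrow> le x y \<or> le y x"

definition is_antichain :: "'a set \<Rightarrow> ('a \<Rightarrow> 'a \<Rightarrow> bool) \<Rightarrow> 'a set \<Rightarrow> bool" where
  "is_antichain X le A \<longleftrightarrow> A \<subseteq> X \<and>
     (\<forall>x\<in>A. \<forall>y\<in>A. x \<noteq> y \<longrightarrow> \<not> comparable le x y)"

definition is_chain :: "'a set \<Rightarrow> ('a \<Rightarrow> 'a \<Rightarrow> bool) \<Rightarrow> 'a set \<Rightarrow> bool" where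
  "is_chain X le C \<longleftrightarrow> C \<subseteq> X \<and> (\<forall>x\<in>C. \<forall>y\<in>C. comparable le x y)"

definition three_plus_one_free :: "'a set \<Rightarrow> ('a \<Rightarrow> 'a \<Rightarrow> bool) \<Rightarrow> bool" where
  "three_plus_one_free X le \<longleftrightarrow>
     \<not> (\<exists>a\<in>X. \<exists>b\<in>X. \<exists>c\<in>X. \<exists>d\<in>X.
          le a b \<and> a \<noteq> b \<and> le b c \<and> b \<noteq> c \<and>
          \<not> comparable le d a \<and> \<not> comparable le d b \<and> \<not> comparable le d c)"

definition is_partition :: "'a set \<Rightarrow> 'a set set \<Rightarrow> bool" where
  "is_partition X \<P> \<longleftrightarrow> \<Union>\<P> = X \<and> {} \<notin> \<P> \<and>
     (\<forall>A\<in>\<P>. \<forall>B\<in>\<P>. A \<noteq> B \<longrightarrow> A \<inter> B = {})"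

end

(*
  For every x the elements incomparable to x form a finite set: its minimal elements form an
  antichain, and so does the rest, since z < y < y' among them would form a 3+1 with x.

  A partition into antichains together with a chain meeting every block amounts to a map g that
  is the identity on a chain C, maps X into C and has antichains as fibres. Then g x is x or
  incomparable to x, so only finitely many values are possible at each point, and all conditions
  on g concern two points at a time. Finite posets admit such a map (the maximal elements form
  one block, the rest is handled recursively), so compactness of a product of finite discrete
  spaces (Tychonoff) yields one on all of X.
*)
theory Submission
  imports Defs "HOL-Analysis.Function_Topology"
begin

lemma partial_order_on_subset:
  "partial_order_on_set X le \<Longrightarrow> Y \<subseteq> X \<Longrightarrow> partial_order_on_set Y le"
  unfolding partial_order_on_set_def by blast

lemma partial_order_on_setD:
  assumes "partial_order_on_set X le"
  shows partial_order_on_refl: "x \<in> X \<Longrightarrow> le x x"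
    and partial_order_on_trans: "\<lbrakk>x \<in> X; y \<in> X; z \<in> X; le x y; le y z\<rbrakk> \<Longrightarrow> le x z"
  using assms unfolding partial_order_on_set_def by blast+

lemma finite_poset_maximal_above:
  assumes po: "partial_order_on_set X le" and "finite X" "t \<in> X"
  obtains m where "m \<in> X" "le t m" "\<And>y. y \<in> X \<Longrightarrow> le m y \<Longrightarrow> y = m"
proof -
  define less where "less x y \<longleftrightarrow> le x y \<and> x \<noteq> y" for x y
  have "asymp_on X less" "transp_on X less"
    using po unfolding partial_order_on_set_def less_def asymp_on_def transp_on_def by blast+
  moreover have "\<exists>x\<in>X. le t x"
    using po \<open>t \<in> X\<close> unfolding partial_order_on_set_def by blast
  ultimately obtain m where m: "m \<in> X" "le t m" "\<forall>y\<in>X. less m y \<longrightarrow> \<not> le t y"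
    using Finite_Set.bex_max_element_with_property[OF \<open>finite X\<close>] by blast
  have "y = m" if "y \<in> X" "le m y" for y
    using m that po \<open>t \<in> X\<close> unfolding partial_order_on_set_def less_def by blast
  with m show thesis using that by blast
qed

lemma closedin_product_discrete_finitely_determined:
  assumes "finite S"
    and determined: "\<And>f g. \<lbrakk>f \<in> Pi UNIV D; g \<in> Pi UNIV D; \<And>i. i \<in> S \<Longrightarrow> f i = g i\<rbrakk> \<Longrightarrow> P f = P g"
  shows "closedin (product_topology (\<lambda>i. discrete_topology (D i)) UNIV) {f \<in> Pi UNIV D. P f}"
    (is "closedin ?T ?A")
proof -
  have topspace: "topspace ?T = Pi UNIV D"
    by (simp add: PiE_UNIV_domain)
  have "\<exists>N. openin ?T N \<and> f \<in> N \<and> N \<subseteq> topspace ?T - ?A" if f: "f \<in> topspace ?T - ?A" for f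
  proof -
    define N where "N = PiE UNIV (\<lambda>i. if i \<in> S then {f i} else D i)"
    have "f \<in> N"
      using f by (auto simp: N_def topspace)
    moreover have "openin ?T N"
      unfolding N_def openin_PiE_gen
    proof (intro disjI2 conjI ballI)
      show "finite {i \<in> UNIV. (if i \<in> S then {f i} else D i) \<noteq> topspace (discrete_topology (D i))}"
        by (rule finite_subset[OF _ \<open>finite S\<close>]) auto
      show "openin (discrete_topology (D i)) (if i \<in> S then {f i} else D i)" for i
        using f by (auto simp: topspace)
    qed
    moreover have "N \<subseteq> topspace ?T - ?A"
    proof
      fix g assume "g \<in> N"
      then have g: "g i \<in> (if i \<in> S then {f i} else D i)" for i
        by (simp add: N_def PiE_UNIV_domain Pi_iff)
      have "g i \<in> D i" for i
        using g[of i] f by (cases "i \<in> S") (auto simp: topspace)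
      moreover have "g i = f i" if "i \<in> S" for i
        using g[of i] that by simp
      ultimately show "g \<in> topspace ?T - ?A"
        using f determined[of g f] by (auto simp: topspace)
    qed
    ultimately show ?thesis
      by blast
  qed
  then have "openin ?T (topspace ?T - ?A)"
    by (subst openin_subopen) blast
  moreover have "?A \<subseteq> topspace ?T"
    by (auto simp: topspace)
  ultimately show ?thesis
    unfolding closedin_def by blast
qed

lemma finitely_satisfiable_imp_satisfiable:
  fixes D :: "'i \<Rightarrow> 'v set" and ok :: "'k \<Rightarrow> ('i \<Rightarrow> 'v) \<Rightarrow> bool"
  assumes finite_D: "\<And>i. finite (D i)"
    and finite_supp: "\<And>k. k \<in> K \<Longrightarrow> finite (supp k)"
    and depends_on_supp: "\<And>k f g. \<lbrakk>k \<in> K; f \<in> Pi UNIV D; g \<in> Pi UNIV D; \<And>i. i \<in> supp k \<Longrightarrow> f i = g i\<rbrakk>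
                            \<Longrightarrow> ok k f = ok k g"
    and finitely_satisfiable: "\<And>K'. \<lbrakk>K' \<subseteq> K; finite K'\<rbrakk> \<Longrightarrow> \<exists>f \<in> Pi UNIV D. \<forall>k\<in>K'. ok k f"
  shows "\<exists>f \<in> Pi UNIV D. \<forall>k\<in>K. ok k f"
proof -
  define T where "T = product_topology (\<lambda>i. discrete_topology (D i)) UNIV"
  define sat where "sat k = {f \<in> Pi UNIV D. ok k f}" for k
  have topspace_T: "topspace T = Pi UNIV D"
    by (simp add: T_def PiE_UNIV_domain)
  have "compact_space T"
    by (simp add: T_def compact_space_product_topology compact_space_discrete_topology finite_D)
  have "closedin T (sat k)" if k: "k \<in> K" for k
    unfolding T_def sat_def
    by (rule closedin_product_discrete_finitely_determined[OF finite_supp[OF k] depends_on_supp[OF k]])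
  then have closed: "\<forall>C \<in> insert (topspace T) (sat ` K). closedin T C"
    by auto
  have fip: "\<Inter>\<F> \<noteq> {}"
    if fin: "finite \<F>" and sub: "\<F> \<subseteq> insert (topspace T) (sat ` K)" for \<F>
  proof -
    have "finite (\<F> - {topspace T})" "\<F> - {topspace T} \<subseteq> sat ` K"
      using fin sub by auto
    then have "\<exists>K' \<subseteq> K. finite K' \<and> \<F> - {topspace T} = sat ` K'"
      by (rule finite_subset_image)
    then obtain K' where K': "K' \<subseteq> K" "finite K'" "\<F> - {topspace T} = sat ` K'"
      by blast
    obtain f where f: "f \<in> Pi UNIV D" "\<forall>k\<in>K'. ok k f"
      using finitely_satisfiable[OF K'(1,2)] by blast
    have "f \<in> F" if F: "F \<in> \<F>" for F
    proof (cases "F = topspace T")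
      case True
      then show ?thesis using f by (simp add: topspace_T)
    next
      case False
      then obtain k where "k \<in> K'" "F = sat k"
        using K'(3) F by blast
      then show ?thesis using f by (simp add: sat_def)
    qed
    then show ?thesis by blast
  qed
  \<comment> \<open>topspace T is included so that the intersection consists of points of T even if K is empty\<close>
  have "\<Inter>(insert (topspace T) (sat ` K)) \<noteq> {}"
    using \<open>compact_space T\<close>[unfolded compact_space_fip, rule_format, OF conjI[OF closed]] fip
    by blast
  then obtain f where "f \<in> \<Inter>(insert (topspace T) (sat ` K))"
    by blast
  then show ?thesis
    by (auto simp: sat_def topspace_T)
qed

(* Pairwise form of: the fixed points of g form a chain, g maps onto them, and its fibres are antichains. *)
definition chain_retraction_on_pair :: "('a \<Rightarrow> 'a \<Rightarrow> bool) \<Rightarrow> ('a \<Rightarrow> 'a) \<Rightarrow> 'a \<Rightarrow> 'a \<Rightarrow> bool" where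
  "chain_retraction_on_pair le g x y \<longleftrightarrow>
     (g x = x \<and> g y = y \<longrightarrow> comparable le x y) \<and>
     (g x = y \<longrightarrow> g y = y) \<and>
     (x \<noteq> y \<and> g x = g y \<longrightarrow> \<not> comparable le x y)"

definition chain_retraction :: "'a set \<Rightarrow> ('a \<Rightarrow> 'a \<Rightarrow> bool) \<Rightarrow> ('a \<Rightarrow> 'a) \<Rightarrow> bool" where
  "chain_retraction X le g \<longleftrightarrow> g ` X \<subseteq> X \<and> (\<forall>x\<in>X. \<forall>y\<in>X. chain_retraction_on_pair le g x y)"

lemma chain_retraction_onD:
  assumes "chain_retraction X le g" "x \<in> X" "y \<in> X"
  shows "g x = x \<Longrightarrow> g y = y \<Longrightarrow> comparable le x y"
    and "g x = y \<Longrightarrow> g y = y"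
    and "x \<noteq> y \<Longrightarrow> g x = g y \<Longrightarrow> \<not> comparable le x y"
  using assms unfolding chain_retraction_def chain_retraction_on_pair_def by blast+

lemma chain_retraction_incomparable_image:
  assumes g: "chain_retraction X le g" and "x \<in> X"
  shows "g x = x \<or> \<not> comparable le x (g x)"
proof -
  have "g x \<in> X"
    using assms by (auto simp: chain_retraction_def)
  then have "g (g x) = g x"
    using chain_retraction_onD(2)[OF g \<open>x \<in> X\<close>] by blast
  then show ?thesis
    using chain_retraction_onD(3)[OF g \<open>x \<in> X\<close> \<open>g x \<in> X\<close>] by metis
qed

lemma chain_retraction_partition:
  assumes "chain_retraction X le g"
  shows "\<exists>\<P> C. is_partition X \<P> \<and> (\<forall>A\<in>\<P>. is_antichain X le A) \<and>
               is_chain X le C \<and> (\<forall>A\<in>\<P>. C \<inter> A \<noteq> {})"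
proof -
  define C where "C = {c \<in> X. g c = c}"
  define \<P> where "\<P> = (\<lambda>c. {x \<in> X. g x = c}) ` C"
  have gC: "g x \<in> C" if "x \<in> X" for x
    using assms that chain_retraction_onD(2)[OF assms that] by (auto simp: chain_retraction_def C_def)
  have "\<Union>\<P> = X"
  proof
    show "X \<subseteq> \<Union>\<P>"
      using gC unfolding \<P>_def by blast
  qed (auto simp: \<P>_def)
  moreover have "{} \<notin> \<P>"
    by (auto simp: \<P>_def C_def)
  moreover have "A \<inter> B = {}" if "A \<in> \<P>" "B \<in> \<P>" "A \<noteq> B" for A B
    using that by (auto simp: \<P>_def)
  ultimately have "is_partition X \<P>"
    unfolding is_partition_def by blast
  moreover have "is_antichain X le A" if "A \<in> \<P>" for A
    using that chain_retraction_onD(3)[OF assms] by (auto simp: \<P>_def is_antichain_def)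
  moreover have "is_chain X le C"
    using chain_retraction_onD(1)[OF assms] by (auto simp: is_chain_def C_def)
  moreover have "C \<inter> A \<noteq> {}" if "A \<in> \<P>" for A
    using that by (auto simp: \<P>_def C_def)
  ultimately show ?thesis by blast
qed

lemma chain_retraction_extend:
  assumes po: "partial_order_on_set X le"
    and M: "is_antichain X le M"
    and g: "chain_retraction (X - M) le g"
    and m: "m \<in> M"
    and below_m: "\<And>c. c \<in> X - M \<Longrightarrow> g c = c \<Longrightarrow> le c m"
  shows "chain_retraction X le (\<lambda>x. if x \<in> M then m else g x)"
proof -
  define h where "h x = (if x \<in> M then m else g x)" for x
  have mX: "m \<in> X" using M m by (auto simp: is_antichain_def)
  then have "le m m" by (rule partial_order_on_refl[OF po])
  have gX: "g x \<in> X - M" if "x \<in> X - M" for x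
    using g that by (auto simp: chain_retraction_def)
  have "chain_retraction_on_pair le h x y" if "x \<in> X" "y \<in> X" for x y
  proof (cases "x \<in> M"; cases "y \<in> M")
    assume "x \<in> M" "y \<in> M"
    then show ?thesis
      using M m \<open>le m m\<close> by (auto simp: h_def chain_retraction_on_pair_def is_antichain_def comparable_def)
  next
    assume "x \<in> M" "y \<notin> M"
    then show ?thesis
      using below_m[of y] gX[of y] \<open>y \<in> X\<close> m
      by (auto simp: h_def chain_retraction_on_pair_def comparable_def)
  next
    assume "x \<notin> M" "y \<in> M"
    then show ?thesis
      using below_m[of x] gX[of x] \<open>x \<in> X\<close> m
      by (auto simp: h_def chain_retraction_on_pair_def comparable_def)
  next
    assume "x \<notin> M" "y \<notin> M"
    moreover have "chain_retraction_on_pair le g x y"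
      using g that \<open>x \<notin> M\<close> \<open>y \<notin> M\<close> by (simp add: chain_retraction_def)
    ultimately show ?thesis
      by (simp add: h_def chain_retraction_on_pair_def)
  qed
  moreover have "h ` X \<subseteq> X"
    using gX mX by (auto simp: h_def)
  ultimately show ?thesis
    unfolding chain_retraction_def h_def by blast
qed

lemma finite_poset_chain_below_maximal:
  assumes po: "partial_order_on_set X le" and "finite X" "X \<noteq> {}"
    and C: "C \<subseteq> X" "\<And>x y. x \<in> C \<Longrightarrow> y \<in> C \<Longrightarrow> comparable le x y"
  obtains m where "m \<in> X" "\<And>y. y \<in> X \<Longrightarrow> le m y \<Longrightarrow> y = m" "\<And>c. c \<in> C \<Longrightarrow> le c m"
proof (cases "C = {}")
  case True
  obtain t where "t \<in> X"
    using \<open>X \<noteq> {}\<close> by blast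
  then obtain m where "m \<in> X" "\<And>y. y \<in> X \<Longrightarrow> le m y \<Longrightarrow> y = m"
    using finite_poset_maximal_above[OF po \<open>finite X\<close>] by blast
  then show thesis
    using that True by blast
next
  case False
  then obtain t where "t \<in> C" by blast
  have "finite C" "partial_order_on_set C le"
    using C(1) \<open>finite X\<close> partial_order_on_subset[OF po] finite_subset by blast+
  then obtain top where top: "top \<in> C" "\<And>y. y \<in> C \<Longrightarrow> le top y \<Longrightarrow> y = top"
    using finite_poset_maximal_above[OF _ _ \<open>t \<in> C\<close>] by blast
  have below_top: "le c top" if c: "c \<in> C" for c
  proof -
    have "le c c"
      using partial_order_on_refl[OF po] c C(1) by blast
    then show ?thesis
      using C(2)[OF c top(1)] top(2)[OF c] unfolding comparable_def by blast
  qed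
  obtain m where m: "m \<in> X" "le top m" "\<And>y. y \<in> X \<Longrightarrow> le m y \<Longrightarrow> y = m"
    using finite_poset_maximal_above[OF po \<open>finite X\<close>] top(1) C(1) by blast
  moreover have "le c m" if c: "c \<in> C" for c
    using partial_order_on_trans[OF po _ _ m(1) below_top[OF c] m(2)] c top(1) C(1) by blast
  ultimately show thesis
    using that by blast
qed

lemma finite_poset_chain_retraction:
  assumes "finite X" "partial_order_on_set X le"
  shows "\<exists>g. chain_retraction X le g"
  using assms
proof (induction X rule: finite_psubset_induct)
  case (psubset X)
  note po = \<open>partial_order_on_set X le\<close>
  show ?case
  proof (cases "X = {}")
    case True
    then show ?thesis by (simp add: chain_retraction_def)
  next
    case False
    define M where "M = {m \<in> X. \<forall>y\<in>X. le m y \<longrightarrow> y = m}"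
    have M_antichain: "is_antichain X le M"
      unfolding M_def is_antichain_def comparable_def by blast
    obtain t where "t \<in> X"
      using False by blast
    then obtain m0 where "m0 \<in> X" "\<And>y. y \<in> X \<Longrightarrow> le m0 y \<Longrightarrow> y = m0"
      using finite_poset_maximal_above[OF po \<open>finite X\<close>] by blast
    then have "X - M \<subset> X"
      by (auto simp: M_def)
    then obtain g where g: "chain_retraction (X - M) le g"
      using psubset.IH partial_order_on_subset[OF po Diff_subset] by blast
    define C where "C = {c \<in> X - M. g c = c}"
    have "C \<subseteq> X" and C_chain: "\<And>x y. x \<in> C \<Longrightarrow> y \<in> C \<Longrightarrow> comparable le x y"
      using chain_retraction_onD(1)[OF g] by (auto simp: C_def)
    then obtain m where "m \<in> X" "\<And>y. y \<in> X \<Longrightarrow> le m y \<Longrightarrow> y = m" "\<And>c. c \<in> C \<Longrightarrow> le c m"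
      using finite_poset_chain_below_maximal[OF po \<open>finite X\<close> False \<open>C \<subseteq> X\<close> C_chain] by blast
    then have "m \<in> M" "\<And>c. c \<in> C \<Longrightarrow> le c m"
      unfolding M_def by blast+
    then show ?thesis
      using chain_retraction_extend[OF po M_antichain g] unfolding C_def by blast
  qed
qed

lemma three_plus_one_free_incomparables_finite:
  assumes free: "three_plus_one_free X le"
    and no_infinite_antichain: "\<And>A. is_antichain X le A \<Longrightarrow> finite A"
    and "x \<in> X"
  shows "finite {y \<in> X. \<not> comparable le x y}"
proof -
  define J where "J = {y \<in> X. \<not> comparable le x y}"
  define J_min where "J_min = {y \<in> J. \<forall>z\<in>J. le z y \<longrightarrow> z = y}"
  have "is_antichain X le J_min"
    unfolding is_antichain_def comparable_def J_min_def J_def by blast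
  moreover have "is_antichain X le (J - J_min)"
  proof -
    have "\<not> le y y'" if y: "y \<in> J - J_min" "y' \<in> J - J_min" "y \<noteq> y'" for y y'
    proof
      assume "le y y'"
      moreover obtain z where "z \<in> J" "le z y" "z \<noteq> y"
        using y(1) by (auto simp: J_min_def)
      ultimately show False
        using free y \<open>x \<in> X\<close> unfolding three_plus_one_free_def J_def by blast
    qed
    then show ?thesis
      unfolding is_antichain_def comparable_def J_def by blast
  qed
  ultimately have "finite (J_min \<union> (J - J_min))"
    using no_infinite_antichain by blast
  then show ?thesis
    unfolding J_def[symmetric] by (simp add: Un_absorb1 J_min_def)
qed

definition retraction_candidates :: "'a set \<Rightarrow> ('a \<Rightarrow> 'a \<Rightarrow> bool) \<Rightarrow> 'a \<Rightarrow> 'a set" where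
  "retraction_candidates X le x = (if x \<in> X then insert x {y \<in> X. \<not> comparable le x y} else {x})"

lemma chain_retraction_finitely_satisfiable:
  assumes po: "partial_order_on_set X le" and K: "K \<subseteq> X \<times> X" "finite K"
  shows "\<exists>g \<in> Pi UNIV (retraction_candidates X le). \<forall>k \<in> K. chain_retraction_on_pair le g (fst k) (snd k)"
proof -
  define F where "F = fst ` K \<union> snd ` K"
  have "F \<subseteq> X" "finite F"
    using K by (auto simp: F_def)
  then obtain g0 where g0: "chain_retraction F le g0"
    using finite_poset_chain_retraction partial_order_on_subset[OF po] by blast
  define g where "g x = (if x \<in> F then g0 x else x)" for x
  have "g x \<in> retraction_candidates X le x" for x
  proof (cases "x \<in> F")
    case True
    then have "g0 x \<in> F"
      using g0 by (auto simp: chain_retraction_def)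
    then show ?thesis
      using chain_retraction_incomparable_image[OF g0 True] True \<open>F \<subseteq> X\<close>
      by (auto simp: g_def retraction_candidates_def comparable_def)
  qed (simp add: g_def retraction_candidates_def)
  moreover have "chain_retraction_on_pair le g (fst k) (snd k)" if k: "k \<in> K" for k
  proof -
    have "fst k \<in> F" "snd k \<in> F"
      using k by (auto simp: F_def)
    moreover from this have "chain_retraction_on_pair le g0 (fst k) (snd k)"
      using g0 by (simp add: chain_retraction_def)
    ultimately show ?thesis
      by (simp add: g_def chain_retraction_on_pair_def)
  qed
  ultimately show ?thesis
    by blast
qed

lemma chain_retraction_exists:
  assumes po: "partial_order_on_set X le"
    and finite_incomparables: "\<And>x. x \<in> X \<Longrightarrow> finite {y \<in> X. \<not> comparable le x y}"
  shows "\<exists>g. chain_retraction X le g"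
proof -
  have "\<exists>g \<in> Pi UNIV (retraction_candidates X le).
          \<forall>k \<in> X \<times> X. chain_retraction_on_pair le g (fst k) (snd k)"
  proof (rule finitely_satisfiable_imp_satisfiable[where supp = "\<lambda>k. {fst k, snd k}"])
    show "finite (retraction_candidates X le x)" for x
      using finite_incomparables by (simp add: retraction_candidates_def)
    show "finite {fst k, snd k}" for k :: "'a \<times> 'a"
      by simp
    show "chain_retraction_on_pair le f (fst k) (snd k) = chain_retraction_on_pair le g (fst k) (snd k)"
      if "\<And>i. i \<in> {fst k, snd k} \<Longrightarrow> f i = g i" for k f g
      using that by (simp add: chain_retraction_on_pair_def)
  qed (rule chain_retraction_finitely_satisfiable[OF po])
  then obtain g where g: "g \<in> Pi UNIV (retraction_candidates X le)"
    and pairs: "\<forall>x\<in>X. \<forall>y\<in>X. chain_retraction_on_pair le g x y"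
    by auto
  have "g x \<in> X" if "x \<in> X" for x
    using g that by (auto simp: retraction_candidates_def Pi_iff dest!: spec[of _ x])
  with pairs show ?thesis
    unfolding chain_retraction_def by blast
qed

theorem mainTheorem2:
  fixes X :: "'a set" and le :: "'a \<Rightarrow> 'a \<Rightarrow> bool"
  assumes "partial_order_on_set X le"
    and "three_plus_one_free X le"
    and "\<And>A. is_antichain X le A \<Longrightarrow> finite A"
  shows "\<exists>\<P> C. is_partition X \<P> \<and> (\<forall>A\<in>\<P>. is_antichain X le A) \<and>
               is_chain X le C \<and> (\<forall>A\<in>\<P>. C \<inter> A \<noteq> {})"
proof -
  obtain g where "chain_retraction X le g"
    using chain_retraction_exists[OF assms(1) three_plus_one_free_incomparables_finite[OF assms(2,3)]]
    by blast
  then show ?thesis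
    by (rule chain_retraction_partition)
qed

end
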